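(* Let $\alpha_a$ be a labeled dGL hybrid game and $\varphi$ a formula. The model predictive Angelic subvalue map $M$ for $\alpha_a$ and Angel winning condition $\varphi$ is an inductive Angelic subvalue map for $\alpha_a$ compatible with $\varphi$ (i.e. $\models M(\mathsf{end})\rightarrow\varphi$). Dually, the model predictive Demonic subvalue map $M'$ for $\alpha_a$ and Demon winning condition $\varphi$ is an inductive Demonic subvalue map for $\alpha_a$.
   Context: Differential game logic (dGL). Hybrid games are generated by $\alpha,\beta ::= x:=e \mid \alpha;\beta \mid ?Q \mid \{x'=f(x)\,\&\,Q\} \mid \alpha^{*} \mid \alpha\cup\beta \mid x:=* \mid\ !Q \mid \{x'=f(x)\,\&\,Q\}^{d} \mid \alpha^{\times} \mid \alpha\cap\beta \mid x:=\otimes$, with $x$ a real variable (vector for ODEs), $e,f(x)$ polynomial terms, $Q$ a formula. Players Angel and Demon: $x:=e$ deterministic assignment; in $x:=*$ Angel (in $x:=\otimes$ Demon) assigns any real; in $\{x'=f(x)\&Q\}$ Angel (in $\{\cdot\}^d$ Demon) chooses a duration $r\ge 0$ of following the ODE with $Q$ true throughout; $?Q$ makes Angel lose and $!Q$ makes Demon lose if $Q$ is false; in $\alpha\cup\beta$ Angel (in $\alpha\cap\beta$ Demon) chooses the branch; in $\alpha^*$ Angel (in $\alpha^\times$ Demon) decides before each iteration whether to repeat or stop; $\alpha;\beta$ sequential. Formulas: polynomial (in)equalities closed under connectives, real quantifiers, and modalities $\langle\alpha\rangle\varphi$ (Angel can win $\alpha$ reaching $\varphi$) and $[\alpha]\varphi\equiv\neg\langle\alpha\rangle\neg\varphi$,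 with the standard dGL winning-region semantics ($\langle x:=*\rangle\varphi\leftrightarrow\exists x\varphi$, $\langle x:=\otimes\rangle\varphi\leftrightarrow\forall x\varphi$, $\langle ?Q\rangle\varphi\leftrightarrow Q\wedge\varphi$, $\langle !Q\rangle\varphi\leftrightarrow(Q\rightarrow\varphi)$, $\cup$ as disjunction, $\cap$ as conjunction, $\langle\alpha;\beta\rangle\varphi\leftrightarrow\langle\alpha\rangle\langle\beta\rangle\varphi$, Angel ODE existential, Demon ODE universal, $\langle\alpha^*\rangle$ least and $\langle\alpha^\times\rangle$ greatest fixed point). $\models$ denotes validity. Labels: every node of the syntax tree carries a unique label; $\alpha_a$ has root label $a$; $\mathrm{nodes}(\alpha_a)$ is its set of subgame labels; $\mathsf{end}$ is a special extra label. A map $S$ assigns formulas to a label set containing $\mathrm{nodes}(\alpha_a)\cup\{\mathsf{end}\}$; $S\{\mathsf{end}\mapsto Q\}$ replaces the value at $\mathsf{end}$. $\gamma_g,\delta_d$ denote immediate subgames with root labels $g,d$. Game suffix: $\mathrm{suffix}_a(\alpha_a)=\alpha_a$; for $b\ne a$: for loops $((\gamma_g)^* )_a,((\gamma_g)^\times)_a$ it is $\mathrm{suffix}_b(\gamma_g);\alpha_a$; for $\cup,\cap$ the suffix within the branch containing $b$; for $(\gamma_g;\delta_d)_a$ it is $\mathrm{suffix}_b(\gamma_g);\delta_d$ if $b\in\mathrm{nodes}(\gamma_g)$ else $\mathrm{suffix}_b(\delta_d)$. Model predictive Angelic subvalue map: $M(\mathsf{end})=\varphi$, $M(b)=\langle\mathrm{suffix}_b(\alpha_a)\rangle\varphi$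 for $b\in\mathrm{nodes}(\alpha_a)$; model predictive Demonic: $M'(\mathsf{end})=\varphi$, $M'(b)=[\mathrm{suffix}_b(\alpha_a)]\varphi$. Angelic existential projection $\mathcal{P}(\alpha_a,S)$: $(x:=* )_a\mapsto(x:=* )_a;?S(\mathsf{end})$; Angel ODE $\mapsto$ ODE$;?S(\mathsf{end})$; $(\gamma_g\cup\delta_d)_a\mapsto(?S(g);\mathcal{P}(\gamma_g,S))\cup(?S(d);\mathcal{P}(\delta_d,S))$; $((\gamma_g)^* )_a\mapsto(?S(g);\mathcal{P}(\gamma_g,S\{\mathsf{end}\mapsto S(a)\}))^*;?S(\mathsf{end})$; $(\gamma_g;\delta_d)_a\mapsto\mathcal{P}(\gamma_g,S\{\mathsf{end}\mapsto S(d)\});\mathcal{P}(\delta_d,S)$; $\cap\mapsto\mathcal{P}(\gamma_g,S)\cap\mathcal{P}(\delta_d,S)$; $((\gamma_g)^\times)_a\mapsto\mathcal{P}(\gamma_g,S\{\mathsf{end}\mapsto S(a)\})^\times$; other atomic games unchanged (labels preserved, new nodes fresh labels). Demonic existential projection $\mathcal{D}(\alpha_a,S)$: $(x:=\otimes)_a\mapsto(x:=\otimes)_a;!S(\mathsf{end})$; Demon ODE $\mapsto$ ODE$^d;!S(\mathsf{end})$; $(\gamma_g\cap\delta_d)_a\mapsto(!S(g);\mathcal{D}(\gamma_g,S))\cap(!S(d);\mathcal{D}(\delta_d,S))$; $((\gamma_g)^\times)_a\mapsto(!S(g);\mathcal{D}(\gamma_g,S\{\mathsf{end}\mapsto S(g)\vee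 S(\mathsf{end})\}))^\times;!S(\mathsf{end})$; $(\gamma_g;\delta_d)_a\mapsto\mathcal{D}(\gamma_g,S\{\mathsf{end}\mapsto S(d)\});\mathcal{D}(\delta_d,S)$; $\cup\mapsto\mathcal{D}(\gamma_g,S)\cup\mathcal{D}(\delta_d,S)$; $((\gamma_g)^* )_a\mapsto\mathcal{D}(\gamma_g,S\{\mathsf{end}\mapsto S(a)\})^*$; other atomic games unchanged. Inductive Angelic subvalue map ($S\Vdash\alpha_a$), recursively: atomic $\alpha$ (all assignments, tests, ODEs): $\models S(a)\rightarrow\langle\alpha\rangle S(\mathsf{end})$; $\cup$: $\models S(a)\rightarrow S(g)\vee S(d)$, $S\Vdash\gamma_g$, $S\Vdash\delta_d$; $\cap$: $\models S(a)\rightarrow S(g)\wedge S(d)$ and both; $;$: $\models S(a)\rightarrow S(g)$, $S\{\mathsf{end}\mapsto S(d)\}\Vdash\gamma_g$, $S\Vdash\delta_d$; $((\gamma_g)^* )_a$: $\models S(a)\rightarrow\langle\mathcal{P}(\alpha_a,S)\rangle S(\mathsf{end})$ and $S\{\mathsf{end}\mapsto S(a)\}\Vdash\gamma_g$; $((\gamma_g)^\times)_a$: $\models S(a)\rightarrow S(g)\wedge S(\mathsf{end})$ and $S\{\mathsf{end}\mapsto S(a)\}\Vdash\gamma_g$. Inductive Demonic subvalue map, recursively: atomic: $\models S(a)\rightarrow[\alpha]S(\mathsf{end})$; $\cup$: $\models S(a)\rightarrow S(g)\wedge S(d)$ and both; $\cap$: $\models S(a)\rightarrow S(g)\vee S(d)$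 and both; $;$: $\models S(a)\rightarrow S(g)$, $S\{\mathsf{end}\mapsto S(d)\}$ for $\gamma_g$, $S$ for $\delta_d$; $((\gamma_g)^* )_a$: $\models S(a)\rightarrow S(\mathsf{end})\wedge S(g)$ and $S\{\mathsf{end}\mapsto S(a)\}$ for $\gamma_g$; $((\gamma_g)^\times)_a$: $\models S(a)\rightarrow[\mathcal{D}(\alpha_a,S)]S(\mathsf{end})$ and $S\{\mathsf{end}\mapsto S(a)\}$ for $\gamma_g$. *)

theory Defs
  imports Complex_Main
begin

type_synonym vname = nat
type_synonym state = "vname \<Rightarrow> real"

datatype trm = Var vname | Const real | Plus trm trm | Times trm trm | Neg trm

text \<open>Hybrid games, every node carries a label of type 'l (first argument),
 and formulas.  ODE systems are lists of pairs (x_i, f_i(x)) standing for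
 x_i' = f_i(x).\<close>
datatype 'l game =
    Assign 'l vname trm
  | AssignAny 'l vname
  | AssignDemon 'l vname
  | Test 'l "'l fml"
  | Assert 'l "'l fml"
  | ODE 'l "(vname \<times> trm) list" "'l fml"
  | DODE 'l "(vname \<times> trm) list" "'l fml"
  | Seq 'l "'l game" "'l game"
  | Choice 'l "'l game" "'l game"
  | DChoice 'l "'l game" "'l game"
  | Loop 'l "'l game"
  | DLoop 'l "'l game"
and 'l fml =
    TT | FF
  | Geq trm trm | Gt trm trm | Eq trm trm
  | Not "'l fml" | And "'l fml" "'l fml" | Or "'l fml" "'l fml" | Imp "'l fml" "'l fml"
  | Exists vname "'l fml" | Forall vname "'l fml"
  | Dia "'l game" "'l fml"

definition Box :: "'l game \<Rightarrow> 'l fml \<Rightarrow> 'l fml" where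
  "Box \<alpha> \<phi> = Not (Dia \<alpha> (Not \<phi>))"

primrec tsem :: "trm \<Rightarrow> state \<Rightarrow> real" where
  "tsem (Var x) \<omega> = \<omega> x"
| "tsem (Const c) \<omega> = c"
| "tsem (Plus e1 e2) \<omega> = tsem e1 \<omega> + tsem e2 \<omega>"
| "tsem (Times e1 e2) \<omega> = tsem e1 \<omega> * tsem e2 \<omega>"
| "tsem (Neg e) \<omega> = - tsem e \<omega>"

definition ode_sol :: "(vname \<times> trm) list \<Rightarrow> state set \<Rightarrow> state \<Rightarrow> real \<Rightarrow> (real \<Rightarrow> state) \<Rightarrow> bool" where
  "ode_sol ode Qs \<omega> r sol \<longleftrightarrow>
     0 \<le> r \<and> sol 0 = \<omega>
     \<and> (\<forall>t\<in>{0..r}. \<forall>y. y \<notin> fst ` set ode \<longrightarrow> sol t y = \<omega> y)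
     \<and> (\<forall>t\<in>{0..r}. \<forall>(x,e)\<in>set ode.
           ((\<lambda>s. sol s x) has_real_derivative tsem e (sol t)) (at t within {0..r}))
     \<and> (\<forall>t\<in>{0..r}. sol t \<in> Qs)"

text \<open>game_sem alpha X is Angel's winning region of alpha for goal X;
 fml_sem phi is the set of states where phi is true.\<close>
primrec game_sem :: "'l game \<Rightarrow> state set \<Rightarrow> state set"
  and fml_sem :: "'l fml \<Rightarrow> state set" where
  "game_sem (Assign a x e) X = {\<omega>. \<omega>(x := tsem e \<omega>) \<in> X}"
| "game_sem (AssignAny a x) X = {\<omega>. \<exists>r. \<omega>(x := r) \<in> X}"
| "game_sem (AssignDemon a x) X = {\<omega>. \<forall>r. \<omega>(x := r) \<in> X}"
| "game_sem (Test a Q) X = fml_sem Q \<inter> X"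
| "game_sem (Assert a Q) X = - fml_sem Q \<union> X"
| "game_sem (ODE a ode Q) X =
     {\<omega>. \<exists>r sol. ode_sol ode (fml_sem Q) \<omega> r sol \<and> sol r \<in> X}"
| "game_sem (DODE a ode Q) X =
     {\<omega>. \<forall>r sol. ode_sol ode (fml_sem Q) \<omega> r sol \<longrightarrow> sol r \<in> X}"
| "game_sem (Seq a g d) X = game_sem g (game_sem d X)"
| "game_sem (Choice a g d) X = game_sem g X \<union> game_sem d X"
| "game_sem (DChoice a g d) X = game_sem g X \<inter> game_sem d X"
| "game_sem (Loop a g) X = lfp (\<lambda>Z. X \<union> game_sem g Z)"
| "game_sem (DLoop a g) X = gfp (\<lambda>Z. X \<inter> game_sem g Z)"
| "fml_sem TT = UNIV"
| "fml_sem FF = {}"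
| "fml_sem (Geq e1 e2) = {\<omega>. tsem e1 \<omega> \<ge> tsem e2 \<omega>}"
| "fml_sem (Gt e1 e2) = {\<omega>. tsem e1 \<omega> > tsem e2 \<omega>}"
| "fml_sem (Eq e1 e2) = {\<omega>. tsem e1 \<omega> = tsem e2 \<omega>}"
| "fml_sem (Not p) = - fml_sem p"
| "fml_sem (And p q) = fml_sem p \<inter> fml_sem q"
| "fml_sem (Or p q) = fml_sem p \<union> fml_sem q"
| "fml_sem (Imp p q) = - fml_sem p \<union> fml_sem q"
| "fml_sem (Exists x p) = {\<omega>. \<exists>r. \<omega>(x := r) \<in> fml_sem p}"
| "fml_sem (Forall x p) = {\<omega>. \<forall>r. \<omega>(x := r) \<in> fml_sem p}"
| "fml_sem (Dia g p) = game_sem g (fml_sem p)"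

definition valid :: "'l fml \<Rightarrow> bool" where
  "valid \<phi> \<longleftrightarrow> (\<forall>\<omega>. \<omega> \<in> fml_sem \<phi>)"

primrec lbl :: "'l game \<Rightarrow> 'l" where
  "lbl (Assign a x e) = a" | "lbl (AssignAny a x) = a" | "lbl (AssignDemon a x) = a"
| "lbl (Test a Q) = a" | "lbl (Assert a Q) = a" | "lbl (ODE a ode Q) = a"
| "lbl (DODE a ode Q) = a" | "lbl (Seq a g d) = a" | "lbl (Choice a g d) = a"
| "lbl (DChoice a g d) = a" | "lbl (Loop a g) = a" | "lbl (DLoop a g) = a"

primrec labels :: "'l game \<Rightarrow> 'l list" where
  "labels (Assign a x e) = [a]" | "labels (AssignAny a x) = [a]"
| "labels (AssignDemon a x) = [a]"
| "labels (Test a Q) = [a]" | "labels (Assert a Q) = [a]" | "labels (ODE a ode Q) = [a]"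
| "labels (DODE a ode Q) = [a]"
| "labels (Seq a g d) = a # labels g @ labels d"
| "labels (Choice a g d) = a # labels g @ labels d"
| "labels (DChoice a g d) = a # labels g @ labels d"
| "labels (Loop a g) = a # labels g" | "labels (DLoop a g) = a # labels g"

definition nodes :: "'l game \<Rightarrow> 'l set" where
  "nodes \<alpha> = set (labels \<alpha>)"

text \<open>Label carried by newly created nodes.  Labels of new nodes are never
 consulted by any definition below and the semantics ignores labels.\<close>
definition fresh :: 'l where "fresh = undefined"

datatype 'l slabel = N 'l | End

type_synonym 'l smap = "'l slabel \<Rightarrow> 'l fml"

primrec suffix :: "'l \<Rightarrow> 'l game \<Rightarrow> 'l game" where
  "suffix b (Assign a x e) = Assign a x e"
| "suffix b (AssignAny a x) = AssignAny a x"
| "suffix b (AssignDemon a x) = AssignDemon a x"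
| "suffix b (Test a Q) = Test a Q"
| "suffix b (Assert a Q) = Assert a Q"
| "suffix b (ODE a ode Q) = ODE a ode Q"
| "suffix b (DODE a ode Q) = DODE a ode Q"
| "suffix b (Seq a g d) = (if b = a then Seq a g d
     else if b \<in> nodes g then Seq fresh (suffix b g) d else suffix b d)"
| "suffix b (Choice a g d) = (if b = a then Choice a g d
     else if b \<in> nodes g then suffix b g else suffix b d)"
| "suffix b (DChoice a g d) = (if b = a then DChoice a g d
     else if b \<in> nodes g then suffix b g else suffix b d)"
| "suffix b (Loop a g) = (if b = a then Loop a g else Seq fresh (suffix b g) (Loop a g))"
| "suffix b (DLoop a g) = (if b = a then DLoop a g else Seq fresh (suffix b g) (DLoop a g))"

primrec proj_ang :: "'l game \<Rightarrow> 'l smap \<Rightarrow> 'l game" where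
  "proj_ang (Assign a x e) S = Assign a x e"
| "proj_ang (AssignAny a x) S = Seq fresh (AssignAny a x) (Test fresh (S End))"
| "proj_ang (AssignDemon a x) S = AssignDemon a x"
| "proj_ang (Test a Q) S = Test a Q"
| "proj_ang (Assert a Q) S = Assert a Q"
| "proj_ang (ODE a ode Q) S = Seq fresh (ODE a ode Q) (Test fresh (S End))"
| "proj_ang (DODE a ode Q) S = DODE a ode Q"
| "proj_ang (Seq a g d) S = Seq a (proj_ang g (S(End := S (N (lbl d))))) (proj_ang d S)"
| "proj_ang (Choice a g d) S =
     Choice a (Seq fresh (Test fresh (S (N (lbl g)))) (proj_ang g S))
              (Seq fresh (Test fresh (S (N (lbl d)))) (proj_ang d S))"
| "proj_ang (DChoice a g d) S = DChoice a (proj_ang g S) (proj_ang d S)"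
| "proj_ang (Loop a g) S =
     Seq fresh (Loop a (Seq fresh (Test fresh (S (N (lbl g)))) (proj_ang g (S(End := S (N a))))))
               (Test fresh (S End))"
| "proj_ang (DLoop a g) S = DLoop a (proj_ang g (S(End := S (N a))))"

primrec proj_dem :: "'l game \<Rightarrow> 'l smap \<Rightarrow> 'l game" where
  "proj_dem (Assign a x e) S = Assign a x e"
| "proj_dem (AssignAny a x) S = AssignAny a x"
| "proj_dem (AssignDemon a x) S = Seq fresh (AssignDemon a x) (Assert fresh (S End))"
| "proj_dem (Test a Q) S = Test a Q"
| "proj_dem (Assert a Q) S = Assert a Q"
| "proj_dem (ODE a ode Q) S = ODE a ode Q"
| "proj_dem (DODE a ode Q) S = Seq fresh (DODE a ode Q) (Assert fresh (S End))"
| "proj_dem (Seq a g d) S = Seq a (proj_dem g (S(End := S (N (lbl d))))) (proj_dem d S)"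
| "proj_dem (Choice a g d) S = Choice a (proj_dem g S) (proj_dem d S)"
| "proj_dem (DChoice a g d) S =
     DChoice a (Seq fresh (Assert fresh (S (N (lbl g)))) (proj_dem g S))
               (Seq fresh (Assert fresh (S (N (lbl d)))) (proj_dem d S))"
| "proj_dem (Loop a g) S = Loop a (proj_dem g (S(End := S (N a))))"
| "proj_dem (DLoop a g) S =
     Seq fresh (DLoop a (Seq fresh (Assert fresh (S (N (lbl g))))
                          (proj_dem g (S(End := Or (S (N (lbl g))) (S End))))))
               (Assert fresh (S End))"

primrec ang_subvalue :: "'l smap \<Rightarrow> 'l game \<Rightarrow> bool" where
  "ang_subvalue S (Assign a x e) = valid (Imp (S (N a)) (Dia (Assign a x e) (S End)))"
| "ang_subvalue S (AssignAny a x) = valid (Imp (S (N a)) (Dia (AssignAny a x) (S End)))"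
| "ang_subvalue S (AssignDemon a x) = valid (Imp (S (N a)) (Dia (AssignDemon a x) (S End)))"
| "ang_subvalue S (Test a Q) = valid (Imp (S (N a)) (Dia (Test a Q) (S End)))"
| "ang_subvalue S (Assert a Q) = valid (Imp (S (N a)) (Dia (Assert a Q) (S End)))"
| "ang_subvalue S (ODE a ode Q) = valid (Imp (S (N a)) (Dia (ODE a ode Q) (S End)))"
| "ang_subvalue S (DODE a ode Q) = valid (Imp (S (N a)) (Dia (DODE a ode Q) (S End)))"
| "ang_subvalue S (Choice a g d) =
     (valid (Imp (S (N a)) (Or (S (N (lbl g))) (S (N (lbl d)))))
      \<and> ang_subvalue S g \<and> ang_subvalue S d)"
| "ang_subvalue S (DChoice a g d) =
     (valid (Imp (S (N a)) (And (S (N (lbl g))) (S (N (lbl d)))))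
      \<and> ang_subvalue S g \<and> ang_subvalue S d)"
| "ang_subvalue S (Seq a g d) =
     (valid (Imp (S (N a)) (S (N (lbl g))))
      \<and> ang_subvalue (S(End := S (N (lbl d)))) g \<and> ang_subvalue S d)"
| "ang_subvalue S (Loop a g) =
     (valid (Imp (S (N a)) (Dia (proj_ang (Loop a g) S) (S End)))
      \<and> ang_subvalue (S(End := S (N a))) g)"
| "ang_subvalue S (DLoop a g) =
     (valid (Imp (S (N a)) (And (S (N (lbl g))) (S End)))
      \<and> ang_subvalue (S(End := S (N a))) g)"

primrec dem_subvalue :: "'l smap \<Rightarrow> 'l game \<Rightarrow> bool" where
  "dem_subvalue S (Assign a x e) = valid (Imp (S (N a)) (Box (Assign a x e) (S End)))"
| "dem_subvalue S (AssignAny a x) = valid (Imp (S (N a)) (Box (AssignAny a x) (S End)))"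
| "dem_subvalue S (AssignDemon a x) = valid (Imp (S (N a)) (Box (AssignDemon a x) (S End)))"
| "dem_subvalue S (Test a Q) = valid (Imp (S (N a)) (Box (Test a Q) (S End)))"
| "dem_subvalue S (Assert a Q) = valid (Imp (S (N a)) (Box (Assert a Q) (S End)))"
| "dem_subvalue S (ODE a ode Q) = valid (Imp (S (N a)) (Box (ODE a ode Q) (S End)))"
| "dem_subvalue S (DODE a ode Q) = valid (Imp (S (N a)) (Box (DODE a ode Q) (S End)))"
| "dem_subvalue S (Choice a g d) =
     (valid (Imp (S (N a)) (And (S (N (lbl g))) (S (N (lbl d)))))
      \<and> dem_subvalue S g \<and> dem_subvalue S d)"
| "dem_subvalue S (DChoice a g d) =
     (valid (Imp (S (N a)) (Or (S (N (lbl g))) (S (N (lbl d)))))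
      \<and> dem_subvalue S g \<and> dem_subvalue S d)"
| "dem_subvalue S (Seq a g d) =
     (valid (Imp (S (N a)) (S (N (lbl g))))
      \<and> dem_subvalue (S(End := S (N (lbl d)))) g \<and> dem_subvalue S d)"
| "dem_subvalue S (Loop a g) =
     (valid (Imp (S (N a)) (And (S End) (S (N (lbl g)))))
      \<and> dem_subvalue (S(End := S (N a))) g)"
| "dem_subvalue S (DLoop a g) =
     (valid (Imp (S (N a)) (Box (proj_dem (DLoop a g) S) (S End)))
      \<and> dem_subvalue (S(End := S (N a))) g)"

fun mp_ang :: "'l game \<Rightarrow> 'l fml \<Rightarrow> 'l smap" where
  "mp_ang \<alpha> \<phi> End = \<phi>"
| "mp_ang \<alpha> \<phi> (N b) = Dia (suffix b \<alpha>) \<phi>"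

fun mp_dem :: "'l game \<Rightarrow> 'l fml \<Rightarrow> 'l smap" where
  "mp_dem \<alpha> \<phi> End = \<phi>"
| "mp_dem \<alpha> \<phi> (N b) = Box (suffix b \<alpha>) \<phi>"

end

theory Submission
  imports Defs
begin

(* Both maps satisfy a semantic invariant: the formula at each node
   denotes exactly the winning region of the game remaining from that node, for the goal
   stored at End.  Because labels are distinct, the invariant passes to every subgame
   under the End-updates of the subvalue-map recursion, and it turns all conditions at
   atomic games, choices and sequential compositions into equalities of winning regions.
   At Angel's loop (and dually Demon's loop) the projected game additionally forces every
   iteration to start inside the region of the loop body; a fixpoint comparison shows that
   this loses nothing, since a winning play of the loop never leaves its own winning
   region.  Demon's side is reduced to Angel's by negating the map pointwise, as
   [beta]psi is not <beta> not psi. *)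

unbundle lattice_syntax

lemma lfp_le_lfp_guarded:
  fixes f h :: "'a::complete_lattice \<Rightarrow> 'a"
  assumes "mono f" and "mono h"
    and "\<And>Z. f (lfp (\<lambda>Z. X \<squnion> f Z) \<sqinter> Z) \<le> h Z"
  shows "lfp (\<lambda>Z. (X \<sqinter> Y) \<squnion> f Z)
         \<le> lfp (\<lambda>Z. (X \<sqinter> Y) \<squnion> (f (lfp (\<lambda>Z. X \<squnion> f Z)) \<sqinter> h Z))"
    (is "lfp ?F \<le> ?P")
proof (rule lfp_induct)
  let ?L = "lfp (\<lambda>Z. X \<squnion> f Z)"
  show "mono ?F" using assms(1) by (auto intro!: monoI sup_mono dest: monoD)
  have "mono (\<lambda>Z. (X \<sqinter> Y) \<squnion> (f ?L \<sqinter> h Z))"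
    using assms(2) by (auto intro!: monoI sup_mono inf_mono dest: monoD)
  then have P: "(X \<sqinter> Y) \<squnion> (f ?L \<sqinter> h ?P) = ?P" by (rule lfp_fixpoint)
  have "lfp ?F \<le> ?L" by (rule lfp_mono) (simp add: le_supI1 sup_mono)
  then have "f (lfp ?F \<sqinter> ?P) \<le> f (?L \<sqinter> ?P)"
    by (intro monoD[OF assms(1)]) (simp add: le_infI1)
  also have "\<dots> \<le> f ?L \<sqinter> h ?P"
    using assms(3) monoD[OF assms(1), of "?L \<sqinter> ?P" ?L] by simp
  finally have "?F (lfp ?F \<sqinter> ?P) \<le> (X \<sqinter> Y) \<squnion> (f ?L \<sqinter> h ?P)"
    by (rule sup_mono[OF order_refl])
  then show "?F (lfp ?F \<sqinter> ?P) \<le> ?P" unfolding P .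
qed

lemma gfp_le_gfp_within:
  fixes f h :: "'a::complete_lattice \<Rightarrow> 'a"
  assumes "mono f"
    and "\<And>Z. f (gfp (\<lambda>Z. X \<sqinter> f Z) \<sqinter> Z) \<le> h Z"
  shows "gfp (\<lambda>Z. X \<sqinter> Y \<sqinter> f Z) \<le> gfp (\<lambda>Z. Y \<sqinter> h Z)"
    (is "?Q \<le> _")
proof (rule gfp_upperbound)
  let ?L = "gfp (\<lambda>Z. X \<sqinter> f Z)"
  have "mono (\<lambda>Z. X \<sqinter> Y \<sqinter> f Z)" using assms(1) by (auto intro!: monoI inf_mono dest: monoD)
  then have "X \<sqinter> Y \<sqinter> f ?Q = ?Q" by (rule gfp_fixpoint)
  then have "?Q \<le> X \<sqinter> Y \<sqinter> f ?Q" by simp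
  then have Q: "?Q \<le> Y" "?Q \<le> f ?Q" by simp_all
  have "?Q \<le> ?L" by (rule gfp_mono) (simp add: le_infI1 inf_mono)
  then have "f ?Q \<le> f (?L \<sqinter> ?Q)" by (intro monoD[OF assms(1)]) simp
  also have "\<dots> \<le> h ?Q" by (rule assms(2))
  finally show "?Q \<le> Y \<sqinter> h ?Q" using Q by (auto intro: order.trans)
qed

lemma lfp_le_lfp_within:
  fixes f h :: "'a::complete_lattice \<Rightarrow> 'a"
  assumes "mono f"
    and "\<And>Z. h Z \<le> f (lfp (\<lambda>Z. X \<squnion> f Z) \<squnion> Z)"
  shows "lfp (\<lambda>Z. Y \<squnion> h Z) \<le> lfp (\<lambda>Z. X \<squnion> Y \<squnion> f Z)"
    (is "_ \<le> ?R")
proof (rule lfp_lowerbound)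
  let ?L = "lfp (\<lambda>Z. X \<squnion> f Z)"
  have "mono (\<lambda>Z. X \<squnion> Y \<squnion> f Z)" using assms(1) by (auto intro!: monoI sup_mono dest: monoD)
  then have "X \<squnion> Y \<squnion> f ?R = ?R" by (rule lfp_fixpoint)
  then have "X \<squnion> Y \<squnion> f ?R \<le> ?R" by simp
  then have R: "Y \<le> ?R" "f ?R \<le> ?R" by simp_all
  have "?L \<le> ?R" by (rule lfp_mono) (simp add: le_supI1 sup_mono)
  have "h ?R \<le> f (?L \<squnion> ?R)" by (rule assms(2))
  also have "\<dots> \<le> f ?R" using \<open>?L \<le> ?R\<close> by (intro monoD[OF assms(1)]) simp
  finally show "Y \<squnion> h ?R \<le> ?R" using R by (auto intro: order.trans)
qed

lemma gfp_guarded_le_gfp: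
  fixes f h :: "'a::complete_lattice \<Rightarrow> 'a"
  assumes "mono f" and "mono h"
    and "\<And>Z. h Z \<le> f (gfp (\<lambda>Z. X \<sqinter> f Z) \<squnion> Z)"
  shows "gfp (\<lambda>Z. (X \<squnion> Y) \<sqinter> (f (gfp (\<lambda>Z. X \<sqinter> f Z)) \<squnion> h Z))
         \<le> gfp (\<lambda>Z. (X \<squnion> Y) \<sqinter> f Z)"
    (is "?Q \<le> _")
proof -
  let ?G = "gfp (\<lambda>Z. X \<sqinter> f Z)"
  have "mono (\<lambda>Z. X \<sqinter> f Z)" using assms(1) by (auto intro!: monoI inf_mono dest: monoD)
  then have "X \<sqinter> f ?G = ?G" by (rule gfp_fixpoint)
  then have "?G \<le> X \<sqinter> f ?G" by simp
  then have G: "?G \<le> X" "?G \<le> f ?G" by simp_all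
  have "mono (\<lambda>Z. (X \<squnion> Y) \<sqinter> (f ?G \<squnion> h Z))"
    using assms(2) by (auto intro!: monoI sup_mono inf_mono dest: monoD)
  then have "(X \<squnion> Y) \<sqinter> (f ?G \<squnion> h ?Q) = ?Q" by (rule gfp_fixpoint)
  then have "?Q \<le> (X \<squnion> Y) \<sqinter> (f ?G \<squnion> h ?Q)" by simp
  then have Q: "?Q \<le> X \<squnion> Y" "?Q \<le> f ?G \<squnion> h ?Q" by simp_all
  have "f ?G \<le> f (?G \<squnion> ?Q)" by (intro monoD[OF assms(1)]) simp
  moreover have "h ?Q \<le> f (?G \<squnion> ?Q)" by (rule assms(3))
  ultimately have "?G \<le> f (?G \<squnion> ?Q)" "?Q \<le> f (?G \<squnion> ?Q)"
    using G(2) Q(2) by (auto intro: order.trans)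
  moreover have "?G \<squnion> ?Q \<le> X \<squnion> Y" using G(1) Q(1) by (simp add: le_supI1)
  ultimately have "?G \<squnion> ?Q \<le> (X \<squnion> Y) \<sqinter> f (?G \<squnion> ?Q)" by simp
  then have "?G \<squnion> ?Q \<le> gfp (\<lambda>Z. (X \<squnion> Y) \<sqinter> f Z)" by (rule gfp_upperbound)
  then show ?thesis by simp
qed

(* Induction over game_induct with the map S generalised leaves S eta-expanded in the
   hypotheses, where simp turns S(End := _) into an if-lambda; so induction hypotheses
   are applied by rule, unfolding or blast rather than simp. *)
lemmas game_induct = game.induct[of _ "\<lambda>_. True", simplified,
  case_names Assign AssignAny AssignDemon Test Assert ODE DODE Seq Choice DChoice Loop DLoop]

lemma mono_game_sem: "mono (game_sem \<gamma>)"
proof (induction \<gamma> rule: game_induct)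
  case (Loop a g)
  then show ?case by (auto intro!: monoI lfp_mono dest: monoD)
next
  case (DLoop a g)
  then show ?case by (auto intro!: monoI gfp_mono dest: monoD)
qed (auto intro!: monoI dest: monoD)

lemmas game_sem_mono = monoD[OF mono_game_sem]

lemma game_sem_Loop_unfold:
  "game_sem (Loop a g) X = X \<union> game_sem g (game_sem (Loop a g) X)"
proof -
  have "mono (\<lambda>Z. X \<union> game_sem g Z)" by (intro monoI sup_mono order_refl game_sem_mono)
  from lfp_unfold[OF this] show ?thesis by simp
qed

lemma game_sem_DLoop_unfold:
  "game_sem (DLoop a g) X = X \<inter> game_sem g (game_sem (DLoop a g) X)"
proof -
  have "mono (\<lambda>Z. X \<inter> game_sem g Z)" by (intro monoI inf_mono order_refl game_sem_mono)
  from gfp_unfold[OF this] show ?thesis by simp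
qed

lemma fml_sem_Box [simp]: "fml_sem (Box \<gamma> \<phi>) = - game_sem \<gamma> (- fml_sem \<phi>)"
  by (simp add: Box_def)

lemma lbl_in_nodes: "lbl \<gamma> \<in> nodes \<gamma>"
  by (cases \<gamma>) (auto simp: nodes_def)

lemma suffix_lbl [simp]: "suffix (lbl \<gamma>) \<gamma> = \<gamma>"
  by (cases \<gamma>) auto

(* The subvalue-map recursion changes both the game and the formula at End, so it does
   not preserve mp_ang syntactically; it does preserve this semantic invariant. *)
definition predictive :: "'l smap \<Rightarrow> 'l game \<Rightarrow> bool" where
  "predictive S \<gamma> \<longleftrightarrow>
     (\<forall>b\<in>nodes \<gamma>. fml_sem (S (N b)) = game_sem (suffix b \<gamma>) (fml_sem (S End)))"

lemma predictive_root:
  "predictive S \<gamma> \<Longrightarrow> fml_sem (S (N (lbl \<gamma>))) = game_sem \<gamma> (fml_sem (S End))"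
  using lbl_in_nodes by (fastforce simp: predictive_def)

lemma predictive_cong:
  "predictive S \<gamma> \<Longrightarrow> (\<And>l. fml_sem (S' l) = fml_sem (S l)) \<Longrightarrow> predictive S' \<gamma>"
  by (simp add: predictive_def)

lemma predictive_Seq:
  assumes "distinct (labels (Seq a g d))" and "predictive S (Seq a g d)"
  shows "predictive (S(End := S (N (lbl d)))) g" and "predictive S d"
proof -
  have "a \<notin> nodes g" "a \<notin> nodes d" "nodes g \<inter> nodes d = {}"
    using assms(1) by (auto simp: nodes_def)
  then show d: "predictive S d"
    using assms(2) by (auto simp: predictive_def nodes_def)
  show "predictive (S(End := S (N (lbl d)))) g"
    using assms(2) \<open>a \<notin> nodes g\<close> predictive_root[OF d] by (auto simp: predictive_def nodes_def)
qed

lemma predictive_Choice: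
  assumes "distinct (labels (Choice a g d))" and "predictive S (Choice a g d)"
  shows "predictive S g" and "predictive S d"
proof -
  have "a \<notin> nodes g" "a \<notin> nodes d" "nodes g \<inter> nodes d = {}"
    using assms(1) by (auto simp: nodes_def)
  then show "predictive S g" "predictive S d"
    using assms(2) by (auto simp: predictive_def nodes_def)
qed

lemma predictive_DChoice:
  assumes "distinct (labels (DChoice a g d))" and "predictive S (DChoice a g d)"
  shows "predictive S g" and "predictive S d"
proof -
  have "a \<notin> nodes g" "a \<notin> nodes d" "nodes g \<inter> nodes d = {}"
    using assms(1) by (auto simp: nodes_def)
  then show "predictive S g" "predictive S d"
    using assms(2) by (auto simp: predictive_def nodes_def)
qed

lemma predictive_Loop:
  assumes "distinct (labels (Loop a g))" and "predictive S (Loop a g)"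
  shows "predictive (S(End := S (N a))) g"
proof -
  have "a \<notin> nodes g" using assms(1) by (simp add: nodes_def)
  moreover have "fml_sem (S (N a)) = game_sem (Loop a g) (fml_sem (S End))"
    using predictive_root[OF assms(2)] by simp
  ultimately show ?thesis
    using assms(2) by (auto simp: predictive_def nodes_def simp del: game_sem.simps(11))
qed

lemma predictive_DLoop:
  assumes "distinct (labels (DLoop a g))" and "predictive S (DLoop a g)"
  shows "predictive (S(End := S (N a))) g"
proof -
  have "a \<notin> nodes g" using assms(1) by (simp add: nodes_def)
  moreover have "fml_sem (S (N a)) = game_sem (DLoop a g) (fml_sem (S End))"
    using predictive_root[OF assms(2)] by simp
  ultimately show ?thesis
    using assms(2) by (auto simp: predictive_def nodes_def simp del: game_sem.simps(12))
qed

lemma game_sem_le_proj_ang: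
  assumes "distinct (labels \<gamma>)" and "predictive S \<gamma>"
  shows "game_sem \<gamma> (fml_sem (S End) \<inter> Y) \<subseteq> game_sem (proj_ang \<gamma> S) Y"
  using assms
proof (induction \<gamma> arbitrary: S Y rule: game_induct)
  case (Seq a g d)
  let ?S' = "S(End := S (N (lbl d)))"
  have dist: "distinct (labels g)" "distinct (labels d)" using Seq.prems(1) by simp_all
  note pred = predictive_Seq[OF Seq.prems]
  have "game_sem d (fml_sem (S End) \<inter> Y) \<subseteq> fml_sem (?S' End) \<inter> game_sem (proj_ang d S) Y"
    using Seq.IH(2)[OF dist(2) pred(2)] predictive_root[OF pred(2)]
      game_sem_mono[of "fml_sem (S End) \<inter> Y" "fml_sem (S End)" d] by auto
  then have "game_sem (Seq a g d) (fml_sem (S End) \<inter> Y)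
      \<subseteq> game_sem g (fml_sem (?S' End) \<inter> game_sem (proj_ang d S) Y)"
    by (simp add: game_sem_mono)
  also have "\<dots> \<subseteq> game_sem (proj_ang g ?S') (game_sem (proj_ang d S) Y)"
    by (rule Seq.IH(1)[OF dist(1) pred(1)])
  finally show ?case by simp
next
  case (Choice a g d)
  have dist: "distinct (labels g)" "distinct (labels d)" using Choice.prems(1) by simp_all
  note pred = predictive_Choice[OF Choice.prems]
  show ?case
    using Choice.IH(1)[OF dist(1) pred(1), of Y] Choice.IH(2)[OF dist(2) pred(2), of Y]
      predictive_root[OF pred(1)] predictive_root[OF pred(2)]
      game_sem_mono[of "fml_sem (S End) \<inter> Y" "fml_sem (S End)" g]
      game_sem_mono[of "fml_sem (S End) \<inter> Y" "fml_sem (S End)" d] by auto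
next
  case (DChoice a g d)
  have dist: "distinct (labels g)" "distinct (labels d)" using DChoice.prems(1) by simp_all
  note pred = predictive_DChoice[OF DChoice.prems]
  show ?case
    using DChoice.IH(1)[OF dist(1) pred(1), of Y] DChoice.IH(2)[OF dist(2) pred(2), of Y] by auto
next
  case (Loop a g)
  let ?X = "fml_sem (S End)" and ?S' = "S(End := S (N a))"
  let ?L = "lfp (\<lambda>Z. ?X \<union> game_sem g Z)"
  have dist: "distinct (labels g)" using Loop.prems(1) by simp
  note pred = predictive_Loop[OF Loop.prems]
  have root: "fml_sem (S (N a)) = ?L" using predictive_root[OF Loop.prems(2)] by simp
  have "game_sem g (?L \<inter> Z) \<subseteq> game_sem (proj_ang g ?S') Z" for Z
    using Loop.IH[OF dist pred, of Z] unfolding fun_upd_same root .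
  then have "lfp (\<lambda>Z. ?X \<inter> Y \<union> game_sem g Z)
      \<subseteq> lfp (\<lambda>Z. ?X \<inter> Y \<union> (game_sem g ?L \<inter> game_sem (proj_ang g ?S') Z))"
    by (intro lfp_le_lfp_guarded mono_game_sem)
  moreover have "fml_sem (S (N (lbl g))) = game_sem g ?L"
    using predictive_root[OF pred] root by simp
  ultimately show ?case by simp
next
  case (DLoop a g)
  let ?X = "fml_sem (S End)" and ?S' = "S(End := S (N a))"
  let ?L = "gfp (\<lambda>Z. ?X \<inter> game_sem g Z)"
  have dist: "distinct (labels g)" using DLoop.prems(1) by simp
  note pred = predictive_DLoop[OF DLoop.prems]
  have root: "fml_sem (S (N a)) = ?L" using predictive_root[OF DLoop.prems(2)] by simp
  have "game_sem g (?L \<inter> Z) \<subseteq> game_sem (proj_ang g ?S') Z" for Z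
    using DLoop.IH[OF dist pred, of Z] unfolding fun_upd_same root .
  then show ?case by (simp add: gfp_le_gfp_within mono_game_sem)
qed (auto simp: predictive_def nodes_def)

lemma ang_subvalue_if_predictive:
  assumes "distinct (labels \<gamma>)" and "predictive S \<gamma>"
  shows "ang_subvalue S \<gamma>"
  using assms
proof (induction \<gamma> arbitrary: S rule: game_induct)
  case (Seq a g d)
  have dist: "distinct (labels g)" "distinct (labels d)" using Seq.prems(1) by simp_all
  note pred = predictive_Seq[OF Seq.prems]
  have "valid (Imp (S (N a)) (S (N (lbl g))))"
    using predictive_root[OF Seq.prems(2)] predictive_root[OF pred(1)] predictive_root[OF pred(2)]
    by (simp add: valid_def)
  with Seq.IH(1)[OF dist(1) pred(1)] Seq.IH(2)[OF dist(2) pred(2)] show ?case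
    unfolding ang_subvalue.simps by blast
next
  case (Choice a g d)
  have dist: "distinct (labels g)" "distinct (labels d)" using Choice.prems(1) by simp_all
  note pred = predictive_Choice[OF Choice.prems]
  show ?case
    using Choice.IH(1)[OF dist(1) pred(1)] Choice.IH(2)[OF dist(2) pred(2)]
      predictive_root[OF Choice.prems(2)] predictive_root[OF pred(1)] predictive_root[OF pred(2)]
    by (auto simp: valid_def)
next
  case (DChoice a g d)
  have dist: "distinct (labels g)" "distinct (labels d)" using DChoice.prems(1) by simp_all
  note pred = predictive_DChoice[OF DChoice.prems]
  show ?case
    using DChoice.IH(1)[OF dist(1) pred(1)] DChoice.IH(2)[OF dist(2) pred(2)]
      predictive_root[OF DChoice.prems(2)] predictive_root[OF pred(1)] predictive_root[OF pred(2)]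
    by (auto simp: valid_def)
next
  case (Loop a g)
  have dist: "distinct (labels g)" using Loop.prems(1) by simp
  have "valid (Imp (S (N a)) (Dia (proj_ang (Loop a g) S) (S End)))"
    using game_sem_le_proj_ang[OF Loop.prems, of "fml_sem (S End)"]
      predictive_root[OF Loop.prems(2)] by (auto simp: valid_def simp del: proj_ang.simps)
  with Loop.IH[OF dist predictive_Loop[OF Loop.prems]] show ?case
    unfolding ang_subvalue.simps by blast
next
  case (DLoop a g)
  have dist: "distinct (labels g)" using DLoop.prems(1) by simp
  note pred = predictive_DLoop[OF DLoop.prems]
  have "valid (Imp (S (N a)) (And (S (N (lbl g))) (S End)))"
    using predictive_root[OF DLoop.prems(2)] predictive_root[OF pred]
      game_sem_DLoop_unfold[of a g "fml_sem (S End)"] by (auto simp: valid_def)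
  with DLoop.IH[OF dist pred] show ?case
    unfolding ang_subvalue.simps by blast
qed (auto simp: valid_def dest: predictive_root simp del: game_sem.simps)

definition neg_smap :: "'l smap \<Rightarrow> 'l smap" where
  "neg_smap S = (\<lambda>l. Not (S l))"

lemma neg_smap_upd [simp]: "(neg_smap S)(End := neg_smap S l) = neg_smap (S(End := S l))"
  by (auto simp: neg_smap_def)

lemma predictive_neg_root:
  "predictive (neg_smap S) \<gamma> \<Longrightarrow> - fml_sem (S (N (lbl \<gamma>))) = game_sem \<gamma> (- fml_sem (S End))"
  using predictive_root[of "neg_smap S"] by (simp add: neg_smap_def)

lemma game_sem_proj_dem_le:
  assumes "distinct (labels \<gamma>)" and "predictive (neg_smap S) \<gamma>"
  shows "game_sem (proj_dem \<gamma> S) Y \<subseteq> game_sem \<gamma> (- fml_sem (S End) \<union> Y)"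
  using assms
proof (induction \<gamma> arbitrary: S Y rule: game_induct)
  case (Seq a g d)
  let ?X = "- fml_sem (S End)"
  have dist: "distinct (labels g)" "distinct (labels d)" using Seq.prems(1) by simp_all
  note pred = predictive_Seq[OF Seq.prems, unfolded neg_smap_upd]
  have root_d: "- fml_sem (S (N (lbl d))) = game_sem d ?X"
    using predictive_neg_root[OF pred(2)] by simp
  have "game_sem (proj_dem g (S(End := S (N (lbl d))))) Z
      \<subseteq> game_sem g (- fml_sem (S (N (lbl d))) \<union> Z)" for Z
    by (rule Seq.IH(1)[OF dist(1) pred(1), unfolded fun_upd_same])
  then have "game_sem (proj_dem (Seq a g d) S) Y
      \<subseteq> game_sem g (game_sem d ?X \<union> game_sem (proj_dem d S) Y)"
    unfolding root_d by simp
  also have "\<dots> \<subseteq> game_sem g (game_sem d (?X \<union> Y))"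
    using Seq.IH(2)[OF dist(2) pred(2), of Y] game_sem_mono[of ?X "?X \<union> Y" d]
    by (intro game_sem_mono) auto
  finally show ?case by simp
next
  case (Choice a g d)
  have dist: "distinct (labels g)" "distinct (labels d)" using Choice.prems(1) by simp_all
  note pred = predictive_Choice[OF Choice.prems]
  show ?case
    using Choice.IH(1)[OF dist(1) pred(1), of Y] Choice.IH(2)[OF dist(2) pred(2), of Y] by auto
next
  case (DChoice a g d)
  let ?X = "- fml_sem (S End)"
  have dist: "distinct (labels g)" "distinct (labels d)" using DChoice.prems(1) by simp_all
  note pred = predictive_DChoice[OF DChoice.prems]
  have "- fml_sem (S (N (lbl g))) \<subseteq> game_sem g (?X \<union> Y)"
    using predictive_neg_root[OF pred(1)] game_sem_mono[of ?X "?X \<union> Y" g] by simp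
  moreover have "- fml_sem (S (N (lbl d))) \<subseteq> game_sem d (?X \<union> Y)"
    using predictive_neg_root[OF pred(2)] game_sem_mono[of ?X "?X \<union> Y" d] by simp
  ultimately show ?case
    using DChoice.IH(1)[OF dist(1) pred(1), of Y] DChoice.IH(2)[OF dist(2) pred(2), of Y] by auto
next
  case (Loop a g)
  let ?X = "- fml_sem (S End)" and ?S' = "S(End := S (N a))"
  have dist: "distinct (labels g)" using Loop.prems(1) by simp
  note pred = predictive_Loop[OF Loop.prems, unfolded neg_smap_upd]
  have root: "- fml_sem (S (N a)) = lfp (\<lambda>Z. ?X \<union> game_sem g Z)"
    using predictive_neg_root[OF Loop.prems(2)] by simp
  have "game_sem (proj_dem g ?S') Z \<subseteq> game_sem g (lfp (\<lambda>Z. ?X \<union> game_sem g Z) \<union> Z)" for Z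
    using Loop.IH[OF dist pred, of Z] unfolding fun_upd_same root .
  then show ?case by (simp add: lfp_le_lfp_within mono_game_sem)
next
  case (DLoop a g)
  let ?X = "- fml_sem (S End)"
  let ?G = "gfp (\<lambda>Z. ?X \<inter> game_sem g Z)"
  let ?S' = "S(End := Or (S (N (lbl g))) (S End))"
  have dist: "distinct (labels g)" using DLoop.prems(1) by simp
  note pred = predictive_DLoop[OF DLoop.prems, unfolded neg_smap_upd]
  have root: "- fml_sem (S (N a)) = ?G"
    using predictive_neg_root[OF DLoop.prems(2)] by simp
  have guard: "- fml_sem (S (N (lbl g))) = game_sem g ?G"
    using predictive_neg_root[OF pred] root by simp
  \<comment> \<open>the projection's End formula, S g or S End, denotes the winning region at a\<close>
  have S'_End: "- fml_sem (?S' End) = ?G"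
    using guard game_sem_DLoop_unfold[of a g ?X] by auto
  have "fml_sem (neg_smap ?S' l) = fml_sem (neg_smap (S(End := S (N a))) l)" for l
    using S'_End root by (cases l) (simp_all add: neg_smap_def)
  from predictive_cong[OF pred this]
  have "game_sem (proj_dem g ?S') Z \<subseteq> game_sem g (?G \<union> Z)" for Z
    using DLoop.IH[OF dist] S'_End by metis
  then have "gfp (\<lambda>Z. (?X \<union> Y) \<inter> (game_sem g ?G \<union> game_sem (proj_dem g ?S') Z))
      \<subseteq> gfp (\<lambda>Z. (?X \<union> Y) \<inter> game_sem g Z)"
    by (intro gfp_guarded_le_gfp mono_game_sem)
  then show ?case using guard by simp
qed auto

lemma dem_subvalue_if_predictive_neg:
  assumes "distinct (labels \<gamma>)" and "predictive (neg_smap S) \<gamma>"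
  shows "dem_subvalue S \<gamma>"
  using assms
proof (induction \<gamma> arbitrary: S rule: game_induct)
  case (Seq a g d)
  have dist: "distinct (labels g)" "distinct (labels d)" using Seq.prems(1) by simp_all
  note pred = predictive_Seq[OF Seq.prems, unfolded neg_smap_upd]
  have "- fml_sem (S (N a)) = - fml_sem (S (N (lbl g)))"
    using predictive_neg_root[OF Seq.prems(2)] predictive_neg_root[OF pred(1)]
      predictive_neg_root[OF pred(2)] by simp
  then have "valid (Imp (S (N a)) (S (N (lbl g))))" by (simp add: valid_def)
  with Seq.IH(1)[OF dist(1) pred(1)] Seq.IH(2)[OF dist(2) pred(2)] show ?case
    unfolding dem_subvalue.simps by blast
next
  case (Choice a g d)
  have dist: "distinct (labels g)" "distinct (labels d)" using Choice.prems(1) by simp_all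
  note pred = predictive_Choice[OF Choice.prems]
  show ?case
    using Choice.IH(1)[OF dist(1) pred(1)] Choice.IH(2)[OF dist(2) pred(2)]
      predictive_neg_root[OF Choice.prems(2)] predictive_neg_root[OF pred(1)]
      predictive_neg_root[OF pred(2)] by (auto simp: valid_def)
next
  case (DChoice a g d)
  have dist: "distinct (labels g)" "distinct (labels d)" using DChoice.prems(1) by simp_all
  note pred = predictive_DChoice[OF DChoice.prems]
  show ?case
    using DChoice.IH(1)[OF dist(1) pred(1)] DChoice.IH(2)[OF dist(2) pred(2)]
      predictive_neg_root[OF DChoice.prems(2)] predictive_neg_root[OF pred(1)]
      predictive_neg_root[OF pred(2)] by (auto simp: valid_def)
next
  case (Loop a g)
  have dist: "distinct (labels g)" using Loop.prems(1) by simp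
  note pred = predictive_Loop[OF Loop.prems, unfolded neg_smap_upd]
  have "valid (Imp (S (N a)) (And (S End) (S (N (lbl g)))))"
    using predictive_neg_root[OF Loop.prems(2)] predictive_neg_root[OF pred]
      game_sem_Loop_unfold[of a g "- fml_sem (S End)"] by (auto simp: valid_def)
  with Loop.IH[OF dist pred] show ?case
    unfolding dem_subvalue.simps by blast
next
  case (DLoop a g)
  have dist: "distinct (labels g)" using DLoop.prems(1) by simp
  have "valid (Imp (S (N a)) (Box (proj_dem (DLoop a g) S) (S End)))"
    using game_sem_proj_dem_le[OF DLoop.prems, of "- fml_sem (S End)"]
      predictive_neg_root[OF DLoop.prems(2)]
    by (auto simp: valid_def simp del: proj_dem.simps)
  with DLoop.IH[OF dist predictive_DLoop[OF DLoop.prems, unfolded neg_smap_upd]] show ?case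
    unfolding dem_subvalue.simps by blast
qed (auto simp: valid_def dest!: predictive_neg_root[symmetric] simp del: game_sem.simps)

theorem mainTheorem7:
  fixes \<alpha> :: "'l game" and \<phi> :: "'l fml"
  assumes "distinct (labels \<alpha>)"
  shows "ang_subvalue (mp_ang \<alpha> \<phi>) \<alpha> \<and> valid (Imp (mp_ang \<alpha> \<phi> End) \<phi>)
         \<and> dem_subvalue (mp_dem \<alpha> \<phi>) \<alpha>"
proof (intro conjI)
  have "predictive (mp_ang \<alpha> \<phi>) \<alpha>" by (simp add: predictive_def)
  with assms show "ang_subvalue (mp_ang \<alpha> \<phi>) \<alpha>" by (rule ang_subvalue_if_predictive)
  show "valid (Imp (mp_ang \<alpha> \<phi> End) \<phi>)" by (simp add: valid_def)
  have "predictive (neg_smap (mp_dem \<alpha> \<phi>)) \<alpha>" by (simp add: predictive_def neg_smap_def)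
  with assms show "dem_subvalue (mp_dem \<alpha> \<phi>) \<alpha>" by (rule dem_subvalue_if_predictive_neg)
qed

end
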